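(* Let $q$ be a prime power, $m>1$ an integer, and $j$ an integer with $1\le j\le m-1$ and $\gcd(j,q-1)=1$. Let $\lambda_j(x)=\sum_{0\le i_1<i_2<\cdots<i_j\le m-1}x^{q^{i_1}+\cdots+q^{i_j}}$, the $j$-th elementary symmetric polynomial evaluated at $x,x^q,\ldots,x^{q^{m-1}}$. Then the map $\lambda_j:\mathbf{F}_{q^m}\to\mathbf{F}_q$, $\alpha\mapsto\lambda_j(\alpha)$, is surjective.
   Context: For $\alpha\in\mathbf{F}_{q^m}$ one has $\lambda_j(\alpha)\in\mathbf{F}_q$, so $\lambda_j$ indeed defines a map $\mathbf{F}_{q^m}\to\mathbf{F}_q$. *)

theory Defs
  imports "HOL-Computational_Algebra.Primes"
begin

definition lambda_j :: "nat \<Rightarrow> nat \<Rightarrow> nat \<Rightarrow> 'a::field \<Rightarrow> 'a" where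
  "lambda_j q m j x = (\<Sum>S\<in>{S. S \<subseteq> {0..<m} \<and> card S = j}. x ^ (\<Sum>i\<in>S. q ^ i))"

end

theory Submission
  imports Defs "HOL-Number_Theory.Residues" "HOL-Computational_Algebra.Polynomial"
begin

text \<open>
  The Frobenius map x \<mapsto> x^q is additive and, since x^(q^m) = x, rotates the exponents
  q^i cyclically; so it permutes the monomials of \<lambda>_j and every value lies in F_q.
  For a in F_q each monomial scales by a^j, hence \<lambda>_j(a x) = a^j \<lambda>_j(x), and
  a \<mapsto> a^j permutes F_q^* because gcd(j, q - 1) = 1. It remains to see that \<lambda>_j is not
  identically zero: its monomials have pairwise distinct exponents (distinct sets of base-q
  digits), all below q^m, so it is a nonzero polynomial of degree less than the size of
  the field.
\<close>

lemma sum_powers_lessThan_less: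
  fixes b n :: nat
  assumes "b \<ge> 2"
  shows "(\<Sum>i<n. b ^ i) < b ^ n"
proof (induction n)
  case (Suc n)
  have "(\<Sum>i<Suc n. b ^ i) < b ^ n + b ^ n"
    using Suc.IH by simp
  also have "\<dots> = 2 * b ^ n"
    by simp
  also have "\<dots> \<le> b ^ Suc n"
    by (metis assms mult_le_mono1 power_Suc)
  finally show ?case .
qed simp

lemma sum_powers_subset_less:
  fixes b n :: nat
  assumes "b \<ge> 2" "S \<subseteq> {..<n}"
  shows "(\<Sum>i\<in>S. b ^ i) < b ^ n"
  using le_less_trans[OF sum_mono2[OF finite_lessThan assms(2)] sum_powers_lessThan_less[OF assms(1)]]
  by simp

lemma inj_on_sum_powers:
  fixes b n :: nat
  assumes "b \<ge> 2"
  shows "inj_on (\<lambda>S. \<Sum>i\<in>S. b ^ i) (Pow {..<n})"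
proof (induction n)
  case (Suc n)
  show ?case
  proof (rule inj_onI)
    fix S T
    assume S: "S \<in> Pow {..<Suc n}" and T: "T \<in> Pow {..<Suc n}"
      and eq: "(\<Sum>i\<in>S. b ^ i) = (\<Sum>i\<in>T. b ^ i)"
    have digit_split: "(\<Sum>i\<in>U. b ^ i) = (if n \<in> U then b ^ n else 0) + (\<Sum>i\<in>U - {n}. b ^ i)"
      if "U \<subseteq> {..<Suc n}" for U
      using finite_subset[OF that] by (simp add: sum.remove)
    have low: "(\<Sum>i\<in>U - {n}. b ^ i) < b ^ n" if "U \<subseteq> {..<Suc n}" for U
      by (rule sum_powers_subset_less[OF assms]) (use that in auto)
    have "b ^ n \<le> (\<Sum>i\<in>U. b ^ i)" if "U \<subseteq> {..<Suc n}" "n \<in> U" for U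
      using digit_split[OF that(1)] that(2) by simp
    moreover have "(\<Sum>i\<in>U. b ^ i) < b ^ n" if "U \<subseteq> {..<Suc n}" "n \<notin> U" for U
      using low[OF that(1)] that(2) by simp
    ultimately have top: "n \<in> S \<longleftrightarrow> n \<in> T"
      using eq S T by (metis PowD not_le)
    then have "(\<Sum>i\<in>S - {n}. b ^ i) = (\<Sum>i\<in>T - {n}. b ^ i)"
      using eq digit_split[of S] digit_split[of T] S T by auto
    moreover have "S - {n} \<in> Pow {..<n}" "T - {n} \<in> Pow {..<n}"
      using S T by auto
    ultimately have "S - {n} = T - {n}"
      using Suc.IH by (auto dest: inj_onD)
    with top show "S = T" by blast
  qed
qed simp

lemma power_card_minus_one_eq_1:
  fixes x :: "'a::{finite,field}"
  assumes "x \<noteq> 0"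
  shows "x ^ (card (UNIV :: 'a set) - 1) = 1"
proof -
  let ?U = "UNIV - {0 :: 'a}"
  have "x ^ card ?U * (\<Prod>y\<in>?U. y) = (\<Prod>y\<in>?U. x * y)"
    by (simp add: prod.distrib)
  also have "\<dots> = (\<Prod>y\<in>?U. y)"
    by (rule prod.reindex_bij_witness[of _ "\<lambda>y. y / x" "\<lambda>y. x * y"]) (use assms in auto)
  finally have "x ^ card ?U = 1"
    by simp
  then show ?thesis
    by (simp add: card_Diff_singleton)
qed

lemma power_card_eq_self:
  fixes x :: "'a::{finite,field}"
  shows "x ^ card (UNIV :: 'a set) = x"
proof (cases "x = 0")
  case False
  have "Suc (card (UNIV :: 'a set) - 1) = card (UNIV :: 'a set)"
    by (simp add: finite_UNIV_card_ge_0)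
  then have "x ^ card (UNIV :: 'a set) = x * x ^ (card (UNIV :: 'a set) - 1)"
    by (metis power_Suc)
  with power_card_minus_one_eq_1[OF False] show ?thesis
    by simp
qed (simp add: finite_UNIV_card_ge_0)

lemma CHAR_eq_if_card_eq_prime_power:
  assumes "prime p" "card (UNIV :: 'a::{finite,field} set) = p ^ n"
  shows "CHAR('a) = p"
proof -
  have "prime CHAR('a)"
    by (rule prime_CHAR_semidom) (simp add: finite_imp_CHAR_pos)
  moreover have "CHAR('a) dvd p ^ n"
    using CHAR_dvd_CARD[where 'a = 'a] assms(2) by simp
  ultimately show ?thesis
    using assms(1) by (metis prime_dvd_power primes_dvd_imp_eq)
qed

lemma power_image_nonzero_fixed_points:
  fixes q j :: nat
  assumes "q \<ge> 2" "coprime j (q - 1)" "j > 0"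
  shows "(\<lambda>a. a ^ j) ` {a::'a::{finite,field}. a \<noteq> 0 \<and> a ^ q = a} = {a. a \<noteq> 0 \<and> a ^ q = a}"
    (is "_ ` ?G = ?G")
proof -
  have order: "a ^ (q - 1) = 1" if "a \<in> ?G" for a
  proof -
    have "a ^ (q - 1) * a = a"
      using that assms(1) by (simp flip: power_Suc2)
    with that show ?thesis
      by simp
  qed
  obtain u v where uv: "j * u = (q - 1) * v + 1"
    using bezout_nat[of j "q - 1"] assms(2,3) by auto
  have inverse: "(a ^ j) ^ u = a" if "a \<in> ?G" for a
  proof -
    have "(a ^ j) ^ u = a ^ ((q - 1) * v + 1)"
      by (simp only: uv flip: power_mult)
    also have "\<dots> = (a ^ (q - 1)) ^ v * a"
      by (simp add: power_add power_mult)
    finally show ?thesis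
      using order[OF that] by simp
  qed
  show ?thesis
  proof (rule endo_inj_surj)
    show "(\<lambda>a. a ^ j) ` ?G \<subseteq> ?G"
      by (auto simp: power_mult_distrib) (metis power_mult mult.commute)
    show "inj_on (\<lambda>a. a ^ j) ?G"
      by (metis (no_types, lifting) inj_onI inverse)
  qed simp
qed

lemma bij_betw_image_card_subsets:
  assumes "bij_betw f A B"
  shows "bij_betw (image f) {S. S \<subseteq> A \<and> card S = k} {T. T \<subseteq> B \<and> card T = k}"
proof -
  have Pow: "bij_betw (image f) (Pow A) (Pow B)"
    using bij_betw_image_Pow[OF assms] .
  have card: "card (f ` S) = card S" if "S \<subseteq> A" for S
    using that assms by (intro card_image) (auto simp: bij_betw_def intro: inj_on_subset)
  show ?thesis
    unfolding bij_betw_def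
  proof
    show "inj_on (image f) {S. S \<subseteq> A \<and> card S = k}"
      using Pow by (auto simp: bij_betw_def intro: inj_on_subset)
    show "image f ` {S. S \<subseteq> A \<and> card S = k} = {T. T \<subseteq> B \<and> card T = k}"
    proof (intro equalityI subsetI)
      fix T assume T: "T \<in> {T. T \<subseteq> B \<and> card T = k}"
      then have "T \<in> image f ` Pow A"
        using Pow by (simp add: bij_betw_def)
      then obtain S where "S \<subseteq> A" "T = f ` S"
        by blast
      with T card show "T \<in> image f ` {S. S \<subseteq> A \<and> card S = k}"
        by auto
    qed (use Pow card in \<open>auto simp: bij_betw_def\<close>)
  qed
qed

lemma bij_betw_Suc_mod: "bij_betw (\<lambda>i. Suc i mod m) {..<m} {..<m}"
proof (rule bij_betw_imageI)
  show "inj_on (\<lambda>i. Suc i mod m) {..<m}"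
    by (rule inj_onI) (auto simp: mod_Suc split: if_splits)
  then show "(\<lambda>i. Suc i mod m) ` {..<m} = {..<m}"
    by (intro endo_inj_surj) auto
qed

lemma lambda_j_eq:
  "lambda_j q m j x = (\<Sum>S\<in>{S. S \<subseteq> {..<m} \<and> card S = j}. x ^ (\<Sum>i\<in>S. q ^ i))"
  by (simp add: lambda_j_def atLeast0LessThan)

lemma lambda_j_power_eq_self:
  fixes x :: "'a::field"
  assumes "prime CHAR('a)" "q = CHAR('a) ^ k" "x ^ q ^ m = x"
  shows "lambda_j q m j x ^ q = lambda_j q m j x"
proof -
  define r where "r i = Suc i mod m" for i
  have r: "bij_betw r {..<m} {..<m}"
    unfolding r_def by (rule bij_betw_Suc_mod)
  have monomial: "(x ^ (\<Sum>i\<in>S. q ^ i)) ^ q = x ^ (\<Sum>i\<in>r ` S. q ^ i)"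
    if S: "S \<subseteq> {..<m}" for S
  proof -
    have shift: "x ^ q ^ Suc i = x ^ q ^ r i" if "i < m" for i
      using that assms(3) by (cases "Suc i = m") (simp_all add: r_def)
    have "(x ^ (\<Sum>i\<in>S. q ^ i)) ^ q = x ^ ((\<Sum>i\<in>S. q ^ i) * q)"
      by (simp only: power_mult)
    also have "\<dots> = x ^ (\<Sum>i\<in>S. q ^ Suc i)"
      by (simp add: sum_distrib_left mult.commute)
    also have "\<dots> = (\<Prod>i\<in>S. x ^ q ^ Suc i)"
      by (rule power_sum)
    also have "\<dots> = (\<Prod>i\<in>S. x ^ q ^ r i)"
      using S shift by (intro prod.cong) auto
    also have "\<dots> = (\<Prod>i\<in>r ` S. x ^ q ^ i)"
      using inj_on_subset[OF bij_betw_imp_inj_on[OF r] S] by (simp add: prod.reindex)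
    finally show ?thesis
      by (simp add: power_sum)
  qed
  have "lambda_j q m j x ^ q
      = (\<Sum>S\<in>{S. S \<subseteq> {..<m} \<and> card S = j}. (x ^ (\<Sum>i\<in>S. q ^ i)) ^ q)"
    unfolding lambda_j_eq by (rule freshmans_dream_sum'[OF assms(1,2)])
  also have "\<dots> = (\<Sum>S\<in>{S. S \<subseteq> {..<m} \<and> card S = j}. x ^ (\<Sum>i\<in>r ` S. q ^ i))"
    using monomial by (intro sum.cong) auto
  also have "\<dots> = lambda_j q m j x"
    unfolding lambda_j_eq
    by (rule sum.reindex_bij_betw[OF bij_betw_image_card_subsets[OF r]])
  finally show ?thesis .
qed

lemma lambda_j_mult:
  fixes a x :: "'a::field"
  assumes "a ^ q = a"
  shows "lambda_j q m j (a * x) = a ^ j * lambda_j q m j x"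
proof -
  have power_q_power: "a ^ q ^ i = a" for i
    by (induction i) (simp_all add: power_mult assms)
  have "(a * x) ^ (\<Sum>i\<in>S. q ^ i) = a ^ card S * x ^ (\<Sum>i\<in>S. q ^ i)" for S
    by (simp add: power_mult_distrib power_sum power_q_power prod.distrib)
  then show ?thesis
    by (simp add: lambda_j_eq sum_distrib_left)
qed

lemma lambda_j_zero:
  assumes "q > 0" "j > 0"
  shows "lambda_j q m j 0 = 0"
proof -
  have "(\<Sum>i\<in>S. q ^ i) > 0" if "S \<subseteq> {..<m}" "card S = j" for S
    using that assms by (metis card_gt_0_iff sum_pos zero_less_power)
  then show ?thesis
    unfolding lambda_j_eq by (intro sum.neutral) (simp add: zero_power)
qed

lemma ex_poly_nonzero:
  fixes p :: "'a::{finite,idom} poly"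
  assumes "p \<noteq> 0" "degree p < card (UNIV :: 'a set)"
  shows "\<exists>x. poly p x \<noteq> 0"
proof -
  have "card {x. poly p x = 0} < card (UNIV :: 'a set)"
    using card_poly_roots_bound[OF assms(1)] assms(2) by linarith
  then show ?thesis
    by (metis (mono_tags, lifting) UNIV_I mem_Collect_eq nat_less_le subsetI subset_antisym)
qed

lemma lambda_j_eq_poly:
  "lambda_j q m j x = poly (\<Sum>S\<in>{S. S \<subseteq> {..<m} \<and> card S = j}. monom 1 (\<Sum>i\<in>S. q ^ i)) x"
  by (simp add: lambda_j_eq poly_sum poly_monom)

lemma ex_lambda_j_nonzero:
  fixes q m j :: nat
  assumes "card (UNIV :: 'a::{finite,field} set) = q ^ m" "q \<ge> 2" "j \<le> m"
  shows "\<exists>x::'a. lambda_j q m j x \<noteq> 0"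
proof -
  define SS where "SS = {S. S \<subseteq> {..<m} \<and> card S = j}"
  define e where "e S = (\<Sum>i\<in>S. q ^ i)" for S
  define P :: "'a poly" where "P = (\<Sum>S\<in>SS. monom 1 (e S))"
  have "finite SS"
    by (rule finite_subset[of _ "Pow {..<m}"]) (auto simp: SS_def)
  have "inj_on e SS"
    unfolding e_def by (rule inj_on_subset[OF inj_on_sum_powers[OF assms(2)]]) (auto simp: SS_def)
  have "{..<j} \<in> SS"
    using assms(3) by (auto simp: SS_def)
  have "coeff P (e {..<j}) = (\<Sum>S\<in>SS. if S = {..<j} then 1 else 0)"
    unfolding P_def coeff_sum coeff_monom
    using inj_on_eq_iff[OF \<open>inj_on e SS\<close> _ \<open>{..<j} \<in> SS\<close>] by (intro sum.cong) auto
  also have "\<dots> = 1"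
    using \<open>finite SS\<close> \<open>{..<j} \<in> SS\<close> by simp
  finally have "P \<noteq> 0"
    by auto
  moreover have "degree P < card (UNIV :: 'a set)"
    unfolding P_def assms(1) e_def
    using assms(2) by (intro degree_sum_less) (auto simp: SS_def degree_monom_eq sum_powers_subset_less)
  ultimately obtain x where "poly P x \<noteq> 0"
    using ex_poly_nonzero by blast
  then show ?thesis
    by (auto simp: lambda_j_eq_poly P_def SS_def e_def)
qed

lemma fixed_points_subset_range_lambda_j:
  fixes x0 :: "'a::{finite,field}"
  assumes "q \<ge> 2" "coprime j (q - 1)" "j > 0"
    and "lambda_j q m j x0 \<noteq> 0" "lambda_j q m j x0 ^ q = lambda_j q m j x0"
  shows "{y. y ^ q = y} \<subseteq> range (lambda_j q m j :: 'a \<Rightarrow> 'a)"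
proof
  fix y :: 'a
  assume "y \<in> {y. y ^ q = y}"
  show "y \<in> range (lambda_j q m j :: 'a \<Rightarrow> 'a)"
  proof (cases "y = 0")
    case True
    then have "lambda_j q m j 0 = y"
      using lambda_j_zero[of q j m] assms(1,3) by simp
    then show ?thesis
      by (metis rangeI)
  next
    case False
    with \<open>y \<in> {y. y ^ q = y}\<close> have "y / lambda_j q m j x0 \<in> {a. a \<noteq> 0 \<and> a ^ q = a}"
      using assms(4,5) by (simp add: power_divide)
    also have "\<dots> = (\<lambda>a. a ^ j) ` {a. a \<noteq> 0 \<and> a ^ q = a}"
      by (rule power_image_nonzero_fixed_points[OF assms(1-3), symmetric])
    finally obtain a where a: "a ^ q = a" "a ^ j = y / lambda_j q m j x0"
      by auto
    have "lambda_j q m j (a * x0) = y"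
      using lambda_j_mult[OF a(1)] a(2) assms(4) by simp
    then show ?thesis
      by (metis rangeI)
  qed
qed

theorem lemma3p2:
  fixes q m j :: nat
  assumes "\<exists>p k. prime p \<and> k > 0 \<and> q = p ^ k"
    and "m > 1"
    and "1 \<le> j" and "j \<le> m - 1"
    and "gcd j (q - 1) = 1"
    and "card (UNIV :: 'a::{finite,field} set) = q ^ m"
  shows "(lambda_j q m j :: 'a \<Rightarrow> 'a) ` UNIV = {y :: 'a. y ^ q = y}"
proof -
  obtain p k where p: "prime p" and "k > 0" and q: "q = p ^ k"
    using assms(1) by blast
  have "q \<ge> 2"
    using prime_ge_2_nat[OF p] self_le_power[of p k] \<open>k > 0\<close> q by linarith
  have "CHAR('a) = p"
    using CHAR_eq_if_card_eq_prime_power[OF p] assms(6) q by (simp flip: power_mult)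
  moreover have "x ^ q ^ m = x" for x :: 'a
    using power_card_eq_self[of x] assms(6) by simp
  ultimately have values_fixed: "lambda_j q m j x ^ q = lambda_j q m j x" for x :: 'a
    using lambda_j_power_eq_self p q by blast
  have "j \<le> m"
    using assms(4) by simp
  then obtain x0 :: 'a where "lambda_j q m j x0 \<noteq> 0"
    using ex_lambda_j_nonzero[OF assms(6) \<open>q \<ge> 2\<close>] by blast
  moreover have "coprime j (q - 1)" "j > 0"
    using assms(3,5) by (simp_all add: coprime_iff_gcd_eq_1)
  ultimately have "{y. y ^ q = y} \<subseteq> range (lambda_j q m j :: 'a \<Rightarrow> 'a)"
    using fixed_points_subset_range_lambda_j[OF \<open>q \<ge> 2\<close>] values_fixed by blast
  with values_fixed show ?thesis
    by auto
qed

end
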